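(* Let $(A,\boxplus,0)$ be a mosaic satisfying (Lms1) $0,x\in x\boxplus x$ for all $x\in A$ and (Lms2) $(x\boxplus x)\boxplus(x\boxplus x)=x\boxplus x$ for all $x\in A$. Then for every $x\in A$, $A_x:=x\boxplus x$ is a strong submosaic of $A$. Moreover, for any strong submosaic $B$ of $A$, \[ B=\bigcup_{x\in B}A_x=\bigcup_{x\in B}B_x, \] where $B_x:=(x\boxplus x)\cap B$.
   Context: A multioperation on $A$ is a function $\boxplus:A\times A\to\wp(A)$; for subsets, $X\boxplus Y:=\bigcup_{x\in X,y\in Y}x\boxplus y$. A mosaic $(A,\boxplus,e)$ is a set with a multioperation with neutral element $e$ ($e\boxplus x=x\boxplus e=\{x\}$) that is $\rho$-reversible for some endofunction $\rho$ ($z\in x\boxplus y$ implies $x\in z\boxplus\rho(y)$ and $y\in\rho(x)\boxplus z$). A submosaic is a subset $B\ni e$ such that, with the induced multioperation $x\boxplus_B y:=(x\boxplus y)\cap B$, the inclusion $B\to A$ is an embedding of magmata and $(B,\boxplus_B,e)$ is a mosaic; it is a strong submosaic if moreover the inclusion is a strong morphism, i.e. $x\boxplus y\subseteq B$ for all $x,y\in B$. *)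

theory Defs
  imports Main
begin

text \<open>A multioperation on a carrier set A is modelled as a function
  op :: 'a \<Rightarrow> 'a \<Rightarrow> 'a set, required to take values in subsets of A
  on arguments from A.\<close>

definition setop :: "('a \<Rightarrow> 'a \<Rightarrow> 'a set) \<Rightarrow> 'a set \<Rightarrow> 'a set \<Rightarrow> 'a set" where
  "setop op X Y = (\<Union>x\<in>X. \<Union>y\<in>Y. op x y)"

definition multiop_on :: "'a set \<Rightarrow> ('a \<Rightarrow> 'a \<Rightarrow> 'a set) \<Rightarrow> bool" where
  "multiop_on A op \<longleftrightarrow> (\<forall>x\<in>A. \<forall>y\<in>A. op x y \<subseteq> A)"

definition reversible_wrt :: "'a set \<Rightarrow> ('a \<Rightarrow> 'a \<Rightarrow> 'a set) \<Rightarrow> ('a \<Rightarrow> 'a) \<Rightarrow> bool" where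
  "reversible_wrt A op \<rho> \<longleftrightarrow>
     (\<forall>x\<in>A. \<rho> x \<in> A) \<and>
     (\<forall>x\<in>A. \<forall>y\<in>A. \<forall>z\<in>A. z \<in> op x y \<longrightarrow> x \<in> op z (\<rho> y) \<and> y \<in> op (\<rho> x) z)"

definition mosaic :: "'a set \<Rightarrow> ('a \<Rightarrow> 'a \<Rightarrow> 'a set) \<Rightarrow> 'a \<Rightarrow> bool" where
  "mosaic A op e \<longleftrightarrow>
     multiop_on A op \<and> e \<in> A \<and>
     (\<forall>x\<in>A. op e x = {x} \<and> op x e = {x}) \<and>
     (\<exists>\<rho>. reversible_wrt A op \<rho>)"

definition induced_op :: "'a set \<Rightarrow> ('a \<Rightarrow> 'a \<Rightarrow> 'a set) \<Rightarrow> 'a \<Rightarrow> 'a \<Rightarrow> 'a set" where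
  "induced_op B op x y = op x y \<inter> B"

definition magma_morphism ::
  "'a set \<Rightarrow> ('a \<Rightarrow> 'a \<Rightarrow> 'a set) \<Rightarrow> 'b set \<Rightarrow> ('b \<Rightarrow> 'b \<Rightarrow> 'b set) \<Rightarrow> ('a \<Rightarrow> 'b) \<Rightarrow> bool" where
  "magma_morphism A opA C opC f \<longleftrightarrow>
     (\<forall>x\<in>A. f x \<in> C) \<and> (\<forall>x\<in>A. \<forall>y\<in>A. f ` opA x y \<subseteq> opC (f x) (f y))"

definition strong_magma_morphism ::
  "'a set \<Rightarrow> ('a \<Rightarrow> 'a \<Rightarrow> 'a set) \<Rightarrow> 'b set \<Rightarrow> ('b \<Rightarrow> 'b \<Rightarrow> 'b set) \<Rightarrow> ('a \<Rightarrow> 'b) \<Rightarrow> bool" where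
  "strong_magma_morphism A opA C opC f \<longleftrightarrow>
     (\<forall>x\<in>A. f x \<in> C) \<and> (\<forall>x\<in>A. \<forall>y\<in>A. f ` opA x y = opC (f x) (f y))"

definition magma_embedding ::
  "'a set \<Rightarrow> ('a \<Rightarrow> 'a \<Rightarrow> 'a set) \<Rightarrow> 'b set \<Rightarrow> ('b \<Rightarrow> 'b \<Rightarrow> 'b set) \<Rightarrow> ('a \<Rightarrow> 'b) \<Rightarrow> bool" where
  "magma_embedding A opA C opC f \<longleftrightarrow>
     magma_morphism A opA C opC f \<and> inj_on f A \<and>
     (\<forall>x\<in>A. \<forall>y\<in>A. \<forall>z\<in>A. f z \<in> opC (f x) (f y) \<longrightarrow> z \<in> opA x y)"

definition submosaic :: "'a set \<Rightarrow> ('a \<Rightarrow> 'a \<Rightarrow> 'a set) \<Rightarrow> 'a \<Rightarrow> 'a set \<Rightarrow> bool" where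
  "submosaic A op e B \<longleftrightarrow>
     B \<subseteq> A \<and> e \<in> B \<and>
     magma_embedding B (induced_op B op) A op id \<and>
     mosaic B (induced_op B op) e"

definition strong_submosaic :: "'a set \<Rightarrow> ('a \<Rightarrow> 'a \<Rightarrow> 'a set) \<Rightarrow> 'a \<Rightarrow> 'a set \<Rightarrow> bool" where
  "strong_submosaic A op e B \<longleftrightarrow>
     submosaic A op e B \<and> strong_magma_morphism B (induced_op B op) A op id"

end

theory Submission
  imports Defs
begin

text \<open>Reversing 0 \<in> x \<boxplus> x gives x \<in> \<rho>(x) \<boxplus> 0 = {\<rho>(x)}, so under (Lms1)
  every reversal \<rho> is the identity. Hence any subset containing 0 and
  closed under \<boxplus> is a strong submosaic; (Lms2) says exactly that x \<boxplus> x is closed.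
  Conversely a strong submosaic B is closed under \<boxplus>, hence contains each B_x = A_x,
  and covers itself by them because x \<in> x \<boxplus> x.\<close>

lemma reversal_eq_self:
  assumes "mosaic A op e" and "reversible_wrt A op \<rho>"
    and "a \<in> A" and "e \<in> op a a"
  shows "\<rho> a = a"
proof -
  have "e \<in> A" and "op (\<rho> a) e = {\<rho> a}" and "\<rho> a \<in> A"
    using assms unfolding mosaic_def reversible_wrt_def by auto
  moreover have "a \<in> op (\<rho> a) e"
    using assms(2-4) \<open>e \<in> A\<close> unfolding reversible_wrt_def by blast
  ultimately show ?thesis by simp
qed

lemma strong_submosaicI:
  assumes mos: "mosaic A op e" and rev: "reversible_wrt A op \<rho>"
    and "B \<subseteq> A" and "e \<in> B"
    and rho_closed: "\<And>a. a \<in> B \<Longrightarrow> \<rho> a \<in> B"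
    and op_closed: "\<And>a b. a \<in> B \<Longrightarrow> b \<in> B \<Longrightarrow> op a b \<subseteq> B"
  shows "strong_submosaic A op e B"
proof -
  have neutral: "\<forall>x\<in>B. induced_op B op e x = {x} \<and> induced_op B op x e = {x}"
    using mos \<open>B \<subseteq> A\<close> unfolding mosaic_def induced_op_def by auto
  have "reversible_wrt B (induced_op B op) \<rho>"
    using rev rho_closed \<open>B \<subseteq> A\<close> unfolding reversible_wrt_def induced_op_def by blast
  then have "mosaic B (induced_op B op) e"
    using neutral \<open>e \<in> B\<close> unfolding mosaic_def multiop_on_def induced_op_def by blast
  moreover have "magma_embedding B (induced_op B op) A op id"
    using \<open>B \<subseteq> A\<close> unfolding magma_embedding_def magma_morphism_def induced_op_def by auto
  moreover have "strong_magma_morphism B (induced_op B op) A op id"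
    using \<open>B \<subseteq> A\<close> op_closed unfolding strong_magma_morphism_def induced_op_def by auto
  ultimately show ?thesis
    using \<open>B \<subseteq> A\<close> \<open>e \<in> B\<close> unfolding strong_submosaic_def submosaic_def by blast
qed

lemma strong_submosaic_op_closed:
  assumes "strong_submosaic A op e B" and "a \<in> B" and "b \<in> B"
  shows "op a b \<subseteq> B"
proof -
  have "id ` induced_op B op a b = op a b"
    using assms unfolding strong_submosaic_def strong_magma_morphism_def by simp
  then show ?thesis unfolding induced_op_def by auto
qed

lemma setop_idem_closed:
  assumes "setop op X X = X" and "a \<in> X" and "b \<in> X"
  shows "op a b \<subseteq> X"
  using assms unfolding setop_def by blast

theorem mainTheorem11:
  fixes A :: "'a set" and op :: "'a \<Rightarrow> 'a \<Rightarrow> 'a set" and e :: 'a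
  assumes mos: "mosaic A op e"
    and Lms1: "\<forall>x\<in>A. e \<in> op x x \<and> x \<in> op x x"
    and Lms2: "\<forall>x\<in>A. setop op (op x x) (op x x) = op x x"
  shows "(\<forall>x\<in>A. strong_submosaic A op e (op x x)) \<and>
         (\<forall>B. strong_submosaic A op e B \<longrightarrow>
              B = (\<Union>x\<in>B. op x x) \<and> B = (\<Union>x\<in>B. op x x \<inter> B))"
proof (intro conjI ballI allI impI)
  fix x assume "x \<in> A"
  obtain \<rho> where rev: "reversible_wrt A op \<rho>"
    using mos unfolding mosaic_def by blast
  have "op x x \<subseteq> A"
    using mos \<open>x \<in> A\<close> unfolding mosaic_def multiop_on_def by blast
  show "strong_submosaic A op e (op x x)"
  proof (rule strong_submosaicI[OF mos rev \<open>op x x \<subseteq> A\<close>])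
    show "e \<in> op x x"
      using Lms1 \<open>x \<in> A\<close> by blast
    show "\<rho> a \<in> op x x" if "a \<in> op x x" for a
      using reversal_eq_self[OF mos rev] Lms1 \<open>op x x \<subseteq> A\<close> that by (metis subsetD)
    show "op a b \<subseteq> op x x" if "a \<in> op x x" and "b \<in> op x x" for a b
      using setop_idem_closed[OF Lms2[rule_format, OF \<open>x \<in> A\<close>] that] .
  qed
next
  fix B assume sub: "strong_submosaic A op e B"
  have "B \<subseteq> A"
    using sub unfolding strong_submosaic_def submosaic_def by blast
  have covers: "x \<in> op x x" and closed: "op x x \<subseteq> B" if "x \<in> B" for x
    using Lms1 \<open>B \<subseteq> A\<close> strong_submosaic_op_closed[OF sub that that] that by auto
  show "B = (\<Union>x\<in>B. op x x)"
    using covers closed by blast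
  then show "B = (\<Union>x\<in>B. op x x \<inter> B)"
    by blast
qed

end
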